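(* Let $\boldsymbol\alpha$ be a fixed static allocation in the setting described in the context. Then $$\mathrm{LDR}_{\mathrm{FS}}:=\liminf_{n\to\infty}-\frac1n\log\mathrm{P}\left(i^*_n\neq\{i^*\}\right)\;\ge\;\min_{j\ne i^*}\mathrm{LDR}_{j,i^*},\qquad\text{where } \mathrm{LDR}_{j,i^*}:=\min_{\mathbf M\in\mathcal A_j}\sum_{(i,\theta_b)\in I(\mathbf M)}G_i(\theta_b).$$
   Context: There are $k\ge2$ solutions and $B$ parameter values $\theta_1,\dots,\theta_B$ with probabilities $p_1,\dots,p_B\ge0$, $\sum_bp_b=1$. For each $i,b$, $y_i(\theta_b)\in\mathbb R$ is the mean simulation output of solution $i$ at $\theta_b$. For each $b$, $i^b=\arg\min_iy_i(\theta_b)$ is assumed unique, and the most probable best $i^*=\arg\max_{1\le i\le k}\sum_bp_b\mathbf 1\{i=i^b\}$ is assumed unique. Simulation outputs at $(i,\theta_b)$ are i.i.d. $N(y_i(\theta_b),\lambda_i^2(\theta_b))$ with known $\lambda_i(\theta_b)>0$, independent across pairs. A static allocation is $\boldsymbol\alpha$ with $\alpha_i(\theta_b)\ge0$, $\sum_{i,b}\alpha_i(\theta_b)=1$; after total budget $n$, pair $(i,\theta_b)$ has $N_i^n(\theta_b)$ replications with $N_i^n(\theta_b)/n\to\alpha_i(\theta_b)$ and $N_i^n(\theta_b)\to\infty$. Let $\mu_{i,n}(\theta_b)$ be the sample mean at $(i,\theta_b)$, $i^b_n=\arg\min_i\mu_{i,n}(\theta_b)$, and $i^*_n$ the set of maximizers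 of $i\mapsto\sum_bp_b\mathbf 1\{i=i^b_n\}$ (so a tie counts as $i^*_n\ne\{i^*\}$). Let $\mathcal M=\{\mathbf M\in\{0,1\}^{k\times B}:\mathbf M^\top\mathbf 1_k=\mathbf 1_B\}$ with entries $m_{i,b}$. For $\mathbf M\in\mathcal M$ define $d_j(\mathbf M)=\sum_bp_bm_{i^*,b}-\sum_bp_bm_{j,b}$, $I(\mathbf M)=\{(i,\theta_b):m_{i,b}=1,i\ne i^b\}$, and for $j\ne i^*$, $\mathcal A_j=\{\mathbf M\in\mathcal M:d_j(\mathbf M)\le0\}$. For $i\ne i^b$, $$G_i(\theta_b)=\frac{(y_i(\theta_b)-y_{i^b}(\theta_b))^2}{2\left(\lambda_i^2(\theta_b)/\alpha_i(\theta_b)+\lambda_{i^b}^2(\theta_b)/\alpha_{i^b}(\theta_b)\right)},$$ with $G_i(\theta_b)=0$ if $\alpha_i(\theta_b)=0$ or $\alpha_{i^b}(\theta_b)=0$. *)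

theory Defs
  imports "HOL-Probability.Probability"
begin

text \<open>Solutions are indexed by i < k, parameter values by b < B.
  A matrix M in the set calM is a 0/1 matrix (entries m_{i,b} = of_bool (M i b)) supported on
  {..<k} x {..<B} with exactly one 1 in every column b < B.\<close>

definition calM :: "nat \<Rightarrow> nat \<Rightarrow> (nat \<Rightarrow> nat \<Rightarrow> bool) set" where
  "calM k B = {M. (\<forall>i b. M i b \<longrightarrow> i < k \<and> b < B) \<and> (\<forall>b<B. \<exists>!i. i < k \<and> M i b)}"

definition dgap :: "(nat \<Rightarrow> real) \<Rightarrow> nat \<Rightarrow> nat \<Rightarrow> nat \<Rightarrow> (nat \<Rightarrow> nat \<Rightarrow> bool) \<Rightarrow> real" where
  "dgap p B istar j M = (\<Sum>b<B. p b * of_bool (M istar b)) - (\<Sum>b<B. p b * of_bool (M j b))"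

definition calA :: "nat \<Rightarrow> nat \<Rightarrow> (nat \<Rightarrow> real) \<Rightarrow> nat \<Rightarrow> nat \<Rightarrow> (nat \<Rightarrow> nat \<Rightarrow> bool) set" where
  "calA k B p istar j = {M \<in> calM k B. dgap p B istar j M \<le> 0}"

text \<open>I(M), given the true best solutions ib b (= i^b).\<close>
definition Iset :: "nat \<Rightarrow> nat \<Rightarrow> (nat \<Rightarrow> nat) \<Rightarrow> (nat \<Rightarrow> nat \<Rightarrow> bool) \<Rightarrow> (nat \<times> nat) set" where
  "Iset k B ib M = {(i, b). i < k \<and> b < B \<and> M i b \<and> i \<noteq> ib b}"

definition Grate :: "(nat \<Rightarrow> nat \<Rightarrow> real) \<Rightarrow> (nat \<Rightarrow> nat \<Rightarrow> real) \<Rightarrow> (nat \<Rightarrow> nat \<Rightarrow> real)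
    \<Rightarrow> (nat \<Rightarrow> nat) \<Rightarrow> nat \<Rightarrow> nat \<Rightarrow> real" where
  "Grate y lam alpha ib i b =
     (if alpha i b = 0 \<or> alpha (ib b) b = 0 then 0
      else (y i b - y (ib b) b)\<^sup>2 /
           (2 * ((lam i b)\<^sup>2 / alpha i b + (lam (ib b) b)\<^sup>2 / alpha (ib b) b)))"

definition LDRj :: "nat \<Rightarrow> nat \<Rightarrow> (nat \<Rightarrow> real) \<Rightarrow> (nat \<Rightarrow> nat \<Rightarrow> real) \<Rightarrow> (nat \<Rightarrow> nat \<Rightarrow> real)
    \<Rightarrow> (nat \<Rightarrow> nat \<Rightarrow> real) \<Rightarrow> (nat \<Rightarrow> nat) \<Rightarrow> nat \<Rightarrow> nat \<Rightarrow> real" where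
  "LDRj k B p y lam alpha ib istar j =
     Min ((\<lambda>M. \<Sum>(i, b)\<in>Iset k B ib M. Grate y lam alpha ib i b) ` calA k B p istar j)"

text \<open>Empirical best at parameter b: the index i < k minimising the sample mean
  (ties, a null event, broken towards the smallest index).\<close>
definition emp_best :: "nat \<Rightarrow> (nat \<Rightarrow> real) \<Rightarrow> nat" where
  "emp_best k mu = (LEAST i. i < k \<and> (\<forall>j<k. mu i \<le> mu j))"

definition emp_mpb :: "nat \<Rightarrow> nat \<Rightarrow> (nat \<Rightarrow> real) \<Rightarrow> (nat \<Rightarrow> nat \<Rightarrow> real) \<Rightarrow> nat set" where
  "emp_mpb k B p mu =
     {i. i < k \<and> (\<forall>j<k. (\<Sum>b<B. p b * of_bool (j = emp_best k (\<lambda>l. mu l b)))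
                       \<le> (\<Sum>b<B. p b * of_bool (i = emp_best k (\<lambda>l. mu l b))))}"

definition sample_mean :: "nat \<Rightarrow> (nat \<Rightarrow> real) \<Rightarrow> real" where
  "sample_mean N X = (\<Sum>r<N. X r) / real N"

definition exp_rate :: "nat \<Rightarrow> real \<Rightarrow> ereal" where
  "exp_rate n P = (if P = 0 then \<infinity> else ereal (- ln P / real n))"

end

theory Submission
  imports Defs
begin

(*
  On the event i*_n \<noteq> {i*}, the empirical best solutions b \<mapsto> i^b_n form a selection, i.e. a
  matrix M, under which some j \<noteq> i* collects at least the probability mass of i*, so M \<in> A_j.
  There are finitely many selections, hence by the union bound it suffices to bound, for each
  contested selection, the probability that at every parameter b with sel b \<noteq> i^b the selected
  solution looks no worse than the true best i^b. The sample means are independent normal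
  variables, and the Chernoff bound with the optimal exponential tilt gives
  exp (- \<Sum>_b (y_sel - y_best)^2 / (2 (\<lambda>_sel^2 / N_sel + \<lambda>_best^2 / N_best))),
  which is exp (- n \<Sum>_{I(M)} G) with \<alpha> replaced by the sample fractions N / n.
  Since G is lower semicontinuous in \<alpha>, this exponent eventually exceeds n (LDR - \<epsilon>)
  for every contested selection.
*)

section \<open>Chernoff bounds for sample means of independent normals\<close>

lemma normal_density_mult_exp:
  fixes \<sigma> :: real
  assumes "\<sigma> > 0"
  shows "normal_density \<mu> \<sigma> x * exp (c * x)
       = exp (c * \<mu> + (c * \<sigma>)\<^sup>2 / 2) * normal_density (\<mu> + c * \<sigma>\<^sup>2) \<sigma> x"
proof -
  have "- (x - \<mu>)\<^sup>2 / (2 * \<sigma>\<^sup>2) + c * x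
      = (c * \<mu> + (c * \<sigma>)\<^sup>2 / 2) + - (x - (\<mu> + c * \<sigma>\<^sup>2))\<^sup>2 / (2 * \<sigma>\<^sup>2)"
    using assms by (simp add: field_simps power2_eq_square)
  then show ?thesis
    unfolding normal_density_def by (simp add: exp_add[symmetric])
qed

lemma (in prob_space)
  assumes "\<sigma> > 0" and X: "distributed M lborel X (normal_density \<mu> \<sigma>)"
  shows integrable_exp_normal: "integrable M (\<lambda>\<omega>. exp (c * X \<omega>))"
    and expectation_exp_normal: "expectation (\<lambda>\<omega>. exp (c * X \<omega>)) = exp (c * \<mu> + (c * \<sigma>)\<^sup>2 / 2)"
proof -
  have density: "(\<lambda>x. normal_density \<mu> \<sigma> x * exp (c * x))
      = (\<lambda>x. exp (c * \<mu> + (c * \<sigma>)\<^sup>2 / 2) * normal_density (\<mu> + c * \<sigma>\<^sup>2) \<sigma> x)"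
    using normal_density_mult_exp[OF \<open>\<sigma> > 0\<close>] by auto
  have "integrable lborel (\<lambda>x. normal_density \<mu> \<sigma> x * exp (c * x))"
    unfolding density using \<open>\<sigma> > 0\<close> by (intro integrable_mult_right integrable_normal_density)
  then show "integrable M (\<lambda>\<omega>. exp (c * X \<omega>))"
    using distributed_integrable[OF X, of "\<lambda>x. exp (c * x)"] by simp
  have "(\<integral>x. normal_density \<mu> \<sigma> x * exp (c * x) \<partial>lborel) = exp (c * \<mu> + (c * \<sigma>)\<^sup>2 / 2)"
    unfolding density using \<open>\<sigma> > 0\<close> by simp
  then show "expectation (\<lambda>\<omega>. exp (c * X \<omega>)) = exp (c * \<mu> + (c * \<sigma>)\<^sup>2 / 2)"
    using distributed_integral[OF X, of "\<lambda>x. exp (c * x)"] by simp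
qed

lemma (in prob_space) prob_le_exp_indep_normal_combination:
  fixes X :: "'t \<Rightarrow> 'a \<Rightarrow> real"
  assumes T: "finite T" and indep: "indep_vars (\<lambda>_. borel) X T"
    and distr: "\<And>t. t \<in> T \<Longrightarrow> distributed M lborel (X t) (normal_density (m t) (\<sigma> t))"
    and \<sigma>: "\<And>t. t \<in> T \<Longrightarrow> \<sigma> t > 0"
    and A: "A \<in> events" and nonneg: "\<And>\<omega>. \<omega> \<in> A \<Longrightarrow> 0 \<le> (\<Sum>t\<in>T. c t * X t \<omega>)"
  shows "prob A \<le> exp (\<Sum>t\<in>T. c t * m t + (c t * \<sigma> t)\<^sup>2 / 2)"
proof -
  define Y where "Y t \<omega> = exp (c t * X t \<omega>)" for t \<omega>
  have indep_Y: "indep_vars (\<lambda>_. borel) Y T"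
    unfolding Y_def by (rule indep_vars_compose2[OF indep]) auto
  have Y: "integrable M (Y t)" "expectation (Y t) = exp (c t * m t + (c t * \<sigma> t)\<^sup>2 / 2)"
    if "t \<in> T" for t
    unfolding Y_def using integrable_exp_normal[OF \<sigma> distr] expectation_exp_normal[OF \<sigma> distr] that
    by auto
  have "prob A = expectation (indicator A)"
    using sets.sets_into_space[OF A] by (simp add: Int_absorb2)
  also have "\<dots> \<le> expectation (\<lambda>\<omega>. \<Prod>t\<in>T. Y t \<omega>)"
  proof (rule integral_mono)
    show "integrable M (indicator A :: 'a \<Rightarrow> real)"
      using A by (intro integrable_real_indicator) (auto simp: less_top[symmetric])
    show "integrable M (\<lambda>\<omega>. \<Prod>t\<in>T. Y t \<omega>)"
      using indep_vars_integrable[OF T indep_Y] Y by auto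
    show "indicator A \<omega> \<le> (\<Prod>t\<in>T. Y t \<omega>)" for \<omega>
      using nonneg[of \<omega>] by (auto simp: Y_def exp_sum[OF T, symmetric] indicator_def)
  qed
  also have "\<dots> = (\<Prod>t\<in>T. expectation (Y t))"
    using indep_vars_lebesgue_integral[OF T indep_Y] Y by auto
  also have "\<dots> = exp (\<Sum>t\<in>T. c t * m t + (c t * \<sigma> t)\<^sup>2 / 2)"
    using Y by (simp add: exp_sum T)
  finally show ?thesis .
qed

lemma (in prob_space) prob_le_exp_weighted_sample_means:
  fixes X :: "nat \<Rightarrow> nat \<Rightarrow> nat \<Rightarrow> 'a \<Rightarrow> real" and I :: "(nat \<times> nat) set"
    and Nc :: "nat \<Rightarrow> nat \<Rightarrow> nat"
  assumes I: "finite I"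
    and indep: "indep_vars (\<lambda>_. borel) (\<lambda>(i, b, r). X i b r) {(i, b, r). (i, b) \<in> I}"
    and distr: "\<And>i b r. (i, b) \<in> I \<Longrightarrow> distributed M lborel (X i b r) (normal_density (y i b) (lam i b))"
    and lam: "\<And>i b. (i, b) \<in> I \<Longrightarrow> lam i b > 0"
    and Nc: "\<And>i b. (i, b) \<in> I \<Longrightarrow> Nc i b > 0"
    and A: "A \<in> events"
    and nonneg: "\<And>\<omega>. \<omega> \<in> A \<Longrightarrow> 0 \<le> (\<Sum>(i, b)\<in>I. a i b * sample_mean (Nc i b) (\<lambda>r. X i b r \<omega>))"
  shows "prob A \<le> exp (\<Sum>(i, b)\<in>I. a i b * y i b + (a i b * lam i b)\<^sup>2 / (2 * real (Nc i b)))"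
proof -
  define S where "S = Sigma I (\<lambda>(i, b). {..<Nc i b})"
  define T where "T = (\<lambda>((i, b), r). (i, b, r)) ` S"
  define c where "c = (\<lambda>(i, b, r :: nat). a i b / Nc i b)"
  have T: "finite T"
    using I unfolding T_def S_def by (auto intro: finite_SigmaI)
  have sum_T: "(\<Sum>t\<in>T. g t) = (\<Sum>(i, b)\<in>I. \<Sum>r<Nc i b. g (i, b, r))"
    for g :: "nat \<times> nat \<times> nat \<Rightarrow> real"
  proof -
    have "inj_on (\<lambda>((i, b), r). (i, b, r)) S"
      by (auto simp: inj_on_def)
    then have "(\<Sum>t\<in>T. g t) = (\<Sum>((i, b), r)\<in>S. g (i, b, r))"
      unfolding T_def by (simp add: sum.reindex case_prod_beta')
    also have "\<dots> = (\<Sum>(i, b)\<in>I. \<Sum>r<Nc i b. g (i, b, r))"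
      using I unfolding S_def by (subst sum.Sigma[symmetric]) (auto simp: case_prod_beta')
    finally show ?thesis .
  qed
  have "prob A \<le> exp (\<Sum>t\<in>T. c t * (\<lambda>(i, b, r). y i b) t + (c t * (\<lambda>(i, b, r). lam i b) t)\<^sup>2 / 2)"
  proof (rule prob_le_exp_indep_normal_combination[OF T _ _ _ A])
    show "indep_vars (\<lambda>_. borel) (\<lambda>(i, b, r). X i b r) T"
      by (rule indep_vars_subset[OF indep]) (auto simp: T_def S_def)
    show "distributed M lborel ((\<lambda>(i, b, r). X i b r) t)
        (normal_density ((\<lambda>(i, b, r). y i b) t) ((\<lambda>(i, b, r). lam i b) t))" if "t \<in> T" for t
      using that distr by (auto simp: T_def S_def)
    show "0 < (\<lambda>(i, b, r). lam i b) t" if "t \<in> T" for t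
      using that lam by (auto simp: T_def S_def)
    show "0 \<le> (\<Sum>t\<in>T. c t * (\<lambda>(i, b, r). X i b r) t \<omega>)" if "\<omega> \<in> A" for \<omega>
      using nonneg[OF that]
      by (simp add: sum_T c_def sample_mean_def sum_distrib_left sum_divide_distrib split_beta)
  qed
  also have "(\<Sum>t\<in>T. c t * (\<lambda>(i, b, r). y i b) t + (c t * (\<lambda>(i, b, r). lam i b) t)\<^sup>2 / 2)
      = (\<Sum>(i, b)\<in>I. a i b * y i b + (a i b * lam i b)\<^sup>2 / (2 * real (Nc i b)))"
    unfolding sum_T c_def
    by (intro sum.cong refl) (auto dest!: Nc simp: field_simps power2_eq_square)
  finally show ?thesis .
qed

lemma sum_cell_pairs:
  assumes "finite Bs" and "\<And>b. b \<in> Bs \<Longrightarrow> u b \<noteq> v b"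
  shows "(\<Sum>(i, b)\<in>(\<lambda>b. (u b, b)) ` Bs \<union> (\<lambda>b. (v b, b)) ` Bs. g i b)
       = (\<Sum>b\<in>Bs. g (u b) b + g (v b) b)"
proof -
  have "(\<lambda>b. (u b, b)) ` Bs \<inter> (\<lambda>b. (v b, b)) ` Bs = {}"
    using assms(2) by auto
  moreover have "inj_on (\<lambda>b. (u b, b)) Bs" "inj_on (\<lambda>b. (v b, b)) Bs"
    by (auto simp: inj_on_def)
  ultimately show ?thesis
    using assms(1) by (simp add: sum.union_disjoint sum.reindex sum.distrib)
qed

definition empirically_no_worse ::
    "'a measure \<Rightarrow> (nat \<Rightarrow> nat \<Rightarrow> nat \<Rightarrow> 'a \<Rightarrow> real) \<Rightarrow> (nat \<Rightarrow> nat \<Rightarrow> nat)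
      \<Rightarrow> (nat \<Rightarrow> nat) \<Rightarrow> (nat \<Rightarrow> nat) \<Rightarrow> nat set \<Rightarrow> 'a set" where
  "empirically_no_worse M X Nc u v Bs =
     {\<omega> \<in> space M. \<forall>b\<in>Bs. sample_mean (Nc (u b) b) (\<lambda>r. X (u b) b r \<omega>)
                         \<le> sample_mean (Nc (v b) b) (\<lambda>r. X (v b) b r \<omega>)}"

lemma (in prob_space) empirically_no_worse_in_events:
  assumes "finite Bs"
    and "\<And>i b r. b \<in> Bs \<Longrightarrow> i = u b \<or> i = v b \<Longrightarrow> random_variable borel (X i b r)"
  shows "empirically_no_worse M X Nc u v Bs \<in> events"
  unfolding empirically_no_worse_def sample_mean_def using assms
  by (intro sets.sets_Collect_finite_All borel_measurable_le borel_measurable_divide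
      borel_measurable_sum borel_measurable_const) auto

lemma (in prob_space) prob_empirically_no_worse_le_tilted:
  fixes X :: "nat \<Rightarrow> nat \<Rightarrow> nat \<Rightarrow> 'a \<Rightarrow> real" and u v :: "nat \<Rightarrow> nat"
    and Nc :: "nat \<Rightarrow> nat \<Rightarrow> nat"
  assumes Bs: "finite Bs" and uv: "\<And>b. b \<in> Bs \<Longrightarrow> u b \<noteq> v b"
    and indep: "indep_vars (\<lambda>_. borel) (\<lambda>(i, b, r). X i b r) {(i, b, r). b \<in> Bs \<and> (i = u b \<or> i = v b)}"
    and distr: "\<And>i b r. b \<in> Bs \<Longrightarrow> i = u b \<or> i = v b \<Longrightarrow>
                  distributed M lborel (X i b r) (normal_density (y i b) (lam i b))"
    and lam: "\<And>i b. b \<in> Bs \<Longrightarrow> i = u b \<or> i = v b \<Longrightarrow> lam i b > 0"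
    and Nc: "\<And>i b. b \<in> Bs \<Longrightarrow> i = u b \<or> i = v b \<Longrightarrow> Nc i b > 0"
    and s: "\<And>b. b \<in> Bs \<Longrightarrow> s b \<ge> 0"
  shows "prob (empirically_no_worse M X Nc u v Bs)
    \<le> exp (\<Sum>b\<in>Bs. s b * (y (v b) b - y (u b) b)
                    + (s b)\<^sup>2 * ((lam (u b) b)\<^sup>2 / Nc (u b) b + (lam (v b) b)\<^sup>2 / Nc (v b) b) / 2)"
proof -
  define I where "I = (\<lambda>b. (u b, b)) ` Bs \<union> (\<lambda>b. (v b, b)) ` Bs"
  define a where "a i b = (if i = v b then s b else - s b)" for i b
  have sum_I: "(\<Sum>(i, b)\<in>I. g i b) = (\<Sum>b\<in>Bs. g (u b) b + g (v b) b)" for g :: "nat \<Rightarrow> nat \<Rightarrow> real"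
    unfolding I_def by (rule sum_cell_pairs[OF Bs uv])
  have I: "(i, b) \<in> I \<longleftrightarrow> b \<in> Bs \<and> (i = u b \<or> i = v b)" for i b
    unfolding I_def by auto
  have a: "a (u b) b = - s b" "a (v b) b = s b" if "b \<in> Bs" for b
    unfolding a_def using uv[OF that] by auto
  have "prob (empirically_no_worse M X Nc u v Bs)
      \<le> exp (\<Sum>(i, b)\<in>I. a i b * y i b + (a i b * lam i b)\<^sup>2 / (2 * real (Nc i b)))"
  proof (rule prob_le_exp_weighted_sample_means)
    show "finite I"
      using Bs by (simp add: I_def)
    show "indep_vars (\<lambda>_. borel) (\<lambda>(i, b, r). X i b r) {(i, b, r). (i, b) \<in> I}"
      using indep by (simp add: I)
    show "empirically_no_worse M X Nc u v Bs \<in> events"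
      using Bs distributed_measurable[OF distr] by (intro empirically_no_worse_in_events) auto
    show "0 \<le> (\<Sum>(i, b)\<in>I. a i b * sample_mean (Nc i b) (\<lambda>r. X i b r \<omega>))"
      if "\<omega> \<in> empirically_no_worse M X Nc u v Bs" for \<omega>
      unfolding sum_I
    proof (rule sum_nonneg)
      fix b assume b: "b \<in> Bs"
      then have "sample_mean (Nc (u b) b) (\<lambda>r. X (u b) b r \<omega>) \<le> sample_mean (Nc (v b) b) (\<lambda>r. X (v b) b r \<omega>)"
        using that unfolding empirically_no_worse_def by blast
      then show "0 \<le> a (u b) b * sample_mean (Nc (u b) b) (\<lambda>r. X (u b) b r \<omega>)
          + a (v b) b * sample_mean (Nc (v b) b) (\<lambda>r. X (v b) b r \<omega>)"
        using s[OF b] by (simp add: a[OF b] mult_left_mono)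
    qed
  qed (use distr lam Nc I in auto)
  also have "(\<Sum>(i, b)\<in>I. a i b * y i b + (a i b * lam i b)\<^sup>2 / (2 * real (Nc i b)))
      = (\<Sum>b\<in>Bs. s b * (y (v b) b - y (u b) b)
                    + (s b)\<^sup>2 * ((lam (u b) b)\<^sup>2 / Nc (u b) b + (lam (v b) b)\<^sup>2 / Nc (v b) b) / 2)"
    unfolding sum_I
    by (rule sum.cong[OF refl]) (simp add: a power_mult_distrib add_divide_distrib algebra_simps)
  finally show ?thesis .
qed

lemma (in prob_space) prob_empirically_no_worse_le:
  fixes X :: "nat \<Rightarrow> nat \<Rightarrow> nat \<Rightarrow> 'a \<Rightarrow> real" and u v :: "nat \<Rightarrow> nat"
    and Nc :: "nat \<Rightarrow> nat \<Rightarrow> nat"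
  assumes Bs: "finite Bs" and uv: "\<And>b. b \<in> Bs \<Longrightarrow> u b \<noteq> v b"
    and indep: "indep_vars (\<lambda>_. borel) (\<lambda>(i, b, r). X i b r) {(i, b, r). b \<in> Bs \<and> (i = u b \<or> i = v b)}"
    and distr: "\<And>i b r. b \<in> Bs \<Longrightarrow> i = u b \<or> i = v b \<Longrightarrow>
                  distributed M lborel (X i b r) (normal_density (y i b) (lam i b))"
    and lam: "\<And>i b. b \<in> Bs \<Longrightarrow> i = u b \<or> i = v b \<Longrightarrow> lam i b > 0"
    and Nc: "\<And>i b. b \<in> Bs \<Longrightarrow> i = u b \<or> i = v b \<Longrightarrow> Nc i b > 0"
    and gap: "\<And>b. b \<in> Bs \<Longrightarrow> y (v b) b \<le> y (u b) b"
  shows "prob (empirically_no_worse M X Nc u v Bs)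
    \<le> exp (- (\<Sum>b\<in>Bs. (y (u b) b - y (v b) b)\<^sup>2
                        / (2 * ((lam (u b) b)\<^sup>2 / Nc (u b) b + (lam (v b) b)\<^sup>2 / Nc (v b) b))))"
proof -
  define V where "V b = (lam (u b) b)\<^sup>2 / Nc (u b) b + (lam (v b) b)\<^sup>2 / Nc (v b) b" for b
  have V: "V b > 0" if "b \<in> Bs" for b
    using lam[OF that, of "u b"] lam[OF that, of "v b"] Nc[OF that, of "u b"] Nc[OF that, of "v b"]
    unfolding V_def by (simp add: add_pos_pos)
  \<comment> \<open>the tilt minimising the exponent s (y_v - y_u) + s^2 V / 2 of the tilted bound\<close>
  define s where "s b = (y (u b) b - y (v b) b) / V b" for b
  have "prob (empirically_no_worse M X Nc u v Bs)
      \<le> exp (\<Sum>b\<in>Bs. s b * (y (v b) b - y (u b) b) + (s b)\<^sup>2 * V b / 2)"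
    unfolding V_def using gap V
    by (intro prob_empirically_no_worse_le_tilted[OF Bs uv indep distr lam Nc])
      (auto simp: s_def intro!: divide_nonneg_pos)
  also have "(\<Sum>b\<in>Bs. s b * (y (v b) b - y (u b) b) + (s b)\<^sup>2 * V b / 2)
      = - (\<Sum>b\<in>Bs. (y (u b) b - y (v b) b)\<^sup>2 / (2 * V b))"
    unfolding sum_negf[symmetric]
  proof (rule sum.cong[OF refl])
    fix b assume "b \<in> Bs"
    with V have "V b \<noteq> 0"
      by force
    then show "s b * (y (v b) b - y (u b) b) + (s b)\<^sup>2 * V b / 2 = - ((y (u b) b - y (v b) b)\<^sup>2 / (2 * V b))"
      by (simp add: s_def field_simps power2_eq_square)
  qed
  finally show ?thesis
    unfolding V_def .
qed

section \<open>The rate function G\<close>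

lemma Grate_nonneg:
  assumes "alpha i b \<ge> 0" and "alpha (ib b) b \<ge> 0"
  shows "Grate y lam alpha ib i b \<ge> 0"
  using assms unfolding Grate_def by auto

lemma eventually_less_Grate:
  assumes lim_i: "(\<lambda>n. an n i b) \<longlonglongrightarrow> alpha i b"
    and lim_ib: "(\<lambda>n. an n (ib b) b) \<longlonglongrightarrow> alpha (ib b) b"
    and nonneg: "\<And>n. an n i b \<ge> 0" "\<And>n. an n (ib b) b \<ge> 0"
    and r: "r < Grate y lam alpha ib i b"
  shows "eventually (\<lambda>n. r < Grate y lam (an n) ib i b) sequentially"
proof (cases "Grate y lam alpha ib i b = 0")
  case True
  have "Grate y lam (an n) ib i b \<ge> 0" for n
    using nonneg by (rule Grate_nonneg)
  with True r show ?thesis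
    by (intro always_eventually allI) (auto intro: order.strict_trans2)
next
  case False
  define den where "den a = 2 * ((lam i b)\<^sup>2 / a i b + (lam (ib b) b)\<^sup>2 / a (ib b) b)"
    for a :: "nat \<Rightarrow> nat \<Rightarrow> real"
  have \<alpha>: "alpha i b \<noteq> 0" "alpha (ib b) b \<noteq> 0"
    using False unfolding Grate_def by auto
  with False have "(y i b - y (ib b) b)\<^sup>2 / den alpha \<noteq> 0"
    unfolding Grate_def den_def by simp
  then have den: "den alpha \<noteq> 0"
    by auto
  have "(\<lambda>n. den (an n)) \<longlonglongrightarrow> den alpha"
    unfolding den_def using \<alpha> by (intro tendsto_mult tendsto_add tendsto_divide tendsto_const lim_i lim_ib)
  from tendsto_divide[OF tendsto_const this den]
  have "(\<lambda>n. (y i b - y (ib b) b)\<^sup>2 / den (an n)) \<longlonglongrightarrow> Grate y lam alpha ib i b"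
    using \<alpha> by (simp add: Grate_def den_def)
  from order_tendstoD(1)[OF this r]
  have "eventually (\<lambda>n. r < (y i b - y (ib b) b)\<^sup>2 / den (an n)) sequentially" .
  moreover have "eventually (\<lambda>n. an n i b \<noteq> 0 \<and> an n (ib b) b \<noteq> 0) sequentially"
    using tendsto_imp_eventually_ne[OF lim_i \<alpha>(1)] tendsto_imp_eventually_ne[OF lim_ib \<alpha>(2)]
    by (rule eventually_conj)
  ultimately show ?thesis
    by eventually_elim (simp add: Grate_def den_def)
qed

lemma Grate_sample_fractions:
  assumes "n > 0" and "Nc i b > 0" and "Nc (ib b) b > 0"
  shows "(y i b - y (ib b) b)\<^sup>2 / (2 * ((lam i b)\<^sup>2 / Nc i b + (lam (ib b) b)\<^sup>2 / Nc (ib b) b))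
       = real n * Grate y lam (\<lambda>i b. real (Nc i b) / real n) ib i b"
proof -
  have "(lam i b)\<^sup>2 / (real (Nc i b) / real n) + (lam (ib b) b)\<^sup>2 / (real (Nc (ib b) b) / real n)
      = real n * ((lam i b)\<^sup>2 / Nc i b + (lam (ib b) b)\<^sup>2 / Nc (ib b) b)"
    by (simp add: field_simps)
  then show ?thesis
    using assms by (simp add: Grate_def)
qed

section \<open>Contested selections and the union bound\<close>

definition votes :: "(nat \<Rightarrow> real) \<Rightarrow> nat \<Rightarrow> (nat \<Rightarrow> nat) \<Rightarrow> nat \<Rightarrow> real" where
  "votes p B sel i = (\<Sum>b<B. p b * of_bool (i = sel b))"

(* A selection sel stands for the matrix m_{i,b} = [i = sel b]; it is contested iff that
   matrix lies in calA k B p istar j for some j \<noteq> istar. *)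
definition contested_selections :: "nat \<Rightarrow> nat \<Rightarrow> (nat \<Rightarrow> real) \<Rightarrow> nat \<Rightarrow> (nat \<Rightarrow> nat) set" where
  "contested_selections k B p istar =
     {sel \<in> {..<B} \<rightarrow>\<^sub>E {..<k}. \<exists>j<k. j \<noteq> istar \<and> votes p B sel istar \<le> votes p B sel j}"

lemma finite_contested_selections: "finite (contested_selections k B p istar)"
  unfolding contested_selections_def
  by (rule finite_subset[of _ "{..<B} \<rightarrow>\<^sub>E {..<k}"]) (auto intro: finite_PiE)

lemma emp_best_minimal:
  assumes "0 < k"
  shows "emp_best k mu < k \<and> (\<forall>j<k. mu (emp_best k mu) \<le> mu j)"
proof -
  have fin: "finite (mu ` {..<k})" and ne: "mu ` {..<k} \<noteq> {}"
    using assms by auto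
  obtain m where m: "Min (mu ` {..<k}) = mu m" "m \<in> {..<k}"
    using Min_in[OF fin ne] by (rule imageE)
  have "mu m \<le> mu j" if "j < k" for j
    unfolding m(1)[symmetric] using fin that by (intro Min_le) auto
  with m(2) have "\<exists>i. i < k \<and> (\<forall>j<k. mu i \<le> mu j)"
    by blast
  from LeastI_ex[OF this] show ?thesis
    unfolding emp_best_def .
qed

lemma empirical_selection_contested:
  assumes "istar < k" and mpb: "emp_mpb k B p mu \<noteq> {istar}"
  shows "(\<lambda>b\<in>{..<B}. emp_best k (\<lambda>i. mu i b)) \<in> contested_selections k B p istar"
proof -
  define sel where "sel = (\<lambda>b\<in>{..<B}. emp_best k (\<lambda>i. mu i b))"
  have "0 < k"
    using assms by simp
  then have "sel \<in> {..<B} \<rightarrow>\<^sub>E {..<k}"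
    unfolding sel_def using emp_best_minimal by auto
  moreover have mpb_eq: "emp_mpb k B p mu = {i. i < k \<and> (\<forall>j<k. votes p B sel j \<le> votes p B sel i)}"
    unfolding emp_mpb_def votes_def sel_def by (intro Collect_cong conj_cong all_cong sum.cong refl) auto
  have "\<exists>j<k. j \<noteq> istar \<and> votes p B sel istar \<le> votes p B sel j"
  proof (cases "istar \<in> emp_mpb k B p mu")
    case True
    with mpb obtain j where "j \<in> emp_mpb k B p mu" "j \<noteq> istar"
      by blast
    with True show ?thesis
      unfolding mpb_eq by auto
  next
    case False
    then show ?thesis
      using \<open>istar < k\<close> unfolding mpb_eq by force
  qed
  ultimately have "sel \<in> contested_selections k B p istar"
    unfolding contested_selections_def by blast
  then show ?thesis
    unfolding sel_def .
qed

lemma Min_LDRj_le_selection: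
  assumes sel: "sel \<in> contested_selections k B p istar" and "istar < k"
  shows "Min ((\<lambda>j. LDRj k B p y lam alpha ib istar j) ` ({..<k} - {istar}))
       \<le> (\<Sum>b | b < B \<and> sel b \<noteq> ib b. Grate y lam alpha ib (sel b) b)"
proof -
  define M where "M i b = (i < k \<and> b < B \<and> i = sel b)" for i b
  define cost where "cost M' = (\<Sum>(i, b)\<in>Iset k B ib M'. Grate y lam alpha ib i b)" for M'
  obtain j where j: "j < k" "j \<noteq> istar" "votes p B sel istar \<le> votes p B sel j"
    and sel_k: "\<And>b. b < B \<Longrightarrow> sel b < k"
    using sel unfolding contested_selections_def by auto
  have votes_M: "(\<Sum>b<B. p b * of_bool (M i b)) = votes p B sel i" if "i < k" for i
    unfolding votes_def M_def using that by (intro sum.cong) auto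
  have "dgap p B istar j M \<le> 0"
    unfolding dgap_def votes_M[OF \<open>istar < k\<close>] votes_M[OF j(1)] using j(3) by simp
  moreover have "M \<in> calM k B"
    using sel_k by (auto simp: calM_def M_def)
  ultimately have "M \<in> calA k B p istar j"
    by (simp add: calA_def)
  moreover have "finite (cost ` calA k B p istar j)"
  proof (rule finite_subset)
    show "cost ` calA k B p istar j
        \<subseteq> (\<lambda>S. \<Sum>(i, b)\<in>S. Grate y lam alpha ib i b) ` Pow ({..<k} \<times> {..<B})"
      unfolding cost_def Iset_def by auto
  qed auto
  ultimately have "LDRj k B p y lam alpha ib istar j \<le> cost M"
    unfolding LDRj_def cost_def[symmetric] by (intro Min_le) auto
  also have "cost M = (\<Sum>b | b < B \<and> sel b \<noteq> ib b. Grate y lam alpha ib (sel b) b)"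
  proof -
    have "Iset k B ib M = (\<lambda>b. (sel b, b)) ` {b. b < B \<and> sel b \<noteq> ib b}"
      unfolding Iset_def M_def using sel_k by auto
    then show ?thesis
      unfolding cost_def by (simp add: sum.reindex inj_on_def)
  qed
  finally show ?thesis
    using j by (intro order.trans[OF Min_le]) auto
qed

lemma (in prob_space) prob_selection_no_worse_le:
  fixes X :: "nat \<Rightarrow> nat \<Rightarrow> nat \<Rightarrow> 'a \<Rightarrow> real" and Nc :: "nat \<Rightarrow> nat \<Rightarrow> nat"
  assumes sel_k: "\<And>b. b < B \<Longrightarrow> sel b < k"
    and ib_best: "\<And>b. b < B \<Longrightarrow> ib b < k \<and> (\<forall>j<k. y (ib b) b \<le> y j b)"
    and lam_pos: "\<And>i b. i < k \<Longrightarrow> b < B \<Longrightarrow> lam i b > 0"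
    and X_distr: "\<And>i b r. i < k \<Longrightarrow> b < B \<Longrightarrow>
                    distributed M lborel (X i b r) (normal_density (y i b) (lam i b))"
    and X_indep: "indep_vars (\<lambda>_. borel) (\<lambda>(i, b, r). X i b r) ({..<k} \<times> {..<B} \<times> UNIV)"
    and Nc_pos: "\<And>i b. i < k \<Longrightarrow> b < B \<Longrightarrow> Nc i b > 0"
  defines "D \<equiv> {b. b < B \<and> sel b \<noteq> ib b}"
  shows "empirically_no_worse M X Nc sel ib D \<in> events"
    and "prob (empirically_no_worse M X Nc sel ib D)
      \<le> exp (- (\<Sum>b\<in>D. (y (sel b) b - y (ib b) b)\<^sup>2
                 / (2 * ((lam (sel b) b)\<^sup>2 / Nc (sel b) b + (lam (ib b) b)\<^sup>2 / Nc (ib b) b))))"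
proof -
  have cells: "i < k" "b < B" if "b \<in> D" "i = sel b \<or> i = ib b" for i b
    using that sel_k ib_best unfolding D_def by auto
  have fin: "finite D"
    by (simp add: D_def)
  have uv: "sel b \<noteq> ib b" if "b \<in> D" for b
    using that by (simp add: D_def)
  have "{(i, b, r). b \<in> D \<and> (i = sel b \<or> i = ib b)} \<subseteq> {..<k} \<times> {..<B} \<times> UNIV"
    using cells by fastforce
  then have indep: "indep_vars (\<lambda>_. borel) (\<lambda>(i, b, r). X i b r)
      {(i, b, r). b \<in> D \<and> (i = sel b \<or> i = ib b)}"
    by (rule indep_vars_subset[OF X_indep])
  have "random_variable borel (X i b r)" if "b \<in> D" "i = sel b \<or> i = ib b" for i b r
    using distributed_measurable[OF X_distr[OF cells[OF that]]] by simp
  then show "empirically_no_worse M X Nc sel ib D \<in> events"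
    by (rule empirically_no_worse_in_events[OF fin])
  have gap: "y (ib b) b \<le> y (sel b) b" if "b \<in> D" for b
    using ib_best cells[OF that] by blast
  show "prob (empirically_no_worse M X Nc sel ib D)
      \<le> exp (- (\<Sum>b\<in>D. (y (sel b) b - y (ib b) b)\<^sup>2
                 / (2 * ((lam (sel b) b)\<^sup>2 / Nc (sel b) b + (lam (ib b) b)\<^sup>2 / Nc (ib b) b))))"
    by (rule prob_empirically_no_worse_le[OF fin uv indep _ _ _ gap])
      (simp_all add: X_distr lam_pos Nc_pos cells)
qed

lemma (in prob_space) prob_emp_mpb_error_le:
  fixes X :: "nat \<Rightarrow> nat \<Rightarrow> nat \<Rightarrow> 'a \<Rightarrow> real" and Nc :: "nat \<Rightarrow> nat \<Rightarrow> nat"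
  assumes istar: "istar < k"
    and ib_best: "\<And>b. b < B \<Longrightarrow> ib b < k \<and> (\<forall>j<k. y (ib b) b \<le> y j b)"
    and lam_pos: "\<And>i b. i < k \<Longrightarrow> b < B \<Longrightarrow> lam i b > 0"
    and X_distr: "\<And>i b r. i < k \<Longrightarrow> b < B \<Longrightarrow>
                    distributed M lborel (X i b r) (normal_density (y i b) (lam i b))"
    and X_indep: "indep_vars (\<lambda>_. borel) (\<lambda>(i, b, r). X i b r) ({..<k} \<times> {..<B} \<times> UNIV)"
    and Nc_pos: "\<And>i b. i < k \<Longrightarrow> b < B \<Longrightarrow> Nc i b > 0"
    and "n > 0"
  shows "prob {\<omega> \<in> space M. emp_mpb k B p (\<lambda>i b. sample_mean (Nc i b) (\<lambda>r. X i b r \<omega>)) \<noteq> {istar}}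
    \<le> (\<Sum>sel\<in>contested_selections k B p istar. exp (- (real n *
          (\<Sum>b | b < B \<and> sel b \<noteq> ib b. Grate y lam (\<lambda>i b. real (Nc i b) / real n) ib (sel b) b))))"
    (is "_ \<le> (\<Sum>sel\<in>_. exp (- (real n * ?rate sel)))")
proof -
  define S where "S = contested_selections k B p istar"
  define D where "D sel = {b. b < B \<and> sel b \<noteq> ib b}" for sel :: "nat \<Rightarrow> nat"
  define mean where "mean \<omega> i b = sample_mean (Nc i b) (\<lambda>r. X i b r \<omega>)" for \<omega> i b
  define E where "E sel = empirically_no_worse M X Nc sel ib (D sel)" for sel
  have sel_k: "sel b < k" if "sel \<in> S" "b < B" for sel b
    using that unfolding S_def contested_selections_def by auto
  have E: "E sel \<in> events" "prob (E sel) \<le> exp (- (real n * ?rate sel))" if "sel \<in> S" for sel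
  proof -
    note bound = prob_selection_no_worse_le[OF sel_k[OF that] ib_best lam_pos X_distr X_indep Nc_pos]
    have rate: "(\<Sum>b | b < B \<and> sel b \<noteq> ib b. (y (sel b) b - y (ib b) b)\<^sup>2
          / (2 * ((lam (sel b) b)\<^sup>2 / Nc (sel b) b + (lam (ib b) b)\<^sup>2 / Nc (ib b) b)))
        = real n * ?rate sel"
      unfolding sum_distrib_left
      by (rule sum.cong[OF refl], rule Grate_sample_fractions)
        (use \<open>n > 0\<close> Nc_pos ib_best sel_k[OF that] in auto)
    show "E sel \<in> events"
      unfolding E_def D_def by (rule bound(1))
    show "prob (E sel) \<le> exp (- (real n * ?rate sel))"
      unfolding E_def D_def rate[symmetric] by (rule bound(2))
  qed
  have "{\<omega> \<in> space M. emp_mpb k B p (mean \<omega>) \<noteq> {istar}} \<subseteq> (\<Union>sel\<in>S. E sel)"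
  proof
    fix \<omega> assume \<omega>: "\<omega> \<in> {\<omega> \<in> space M. emp_mpb k B p (mean \<omega>) \<noteq> {istar}}"
    define sel where "sel = (\<lambda>b\<in>{..<B}. emp_best k (\<lambda>i. mean \<omega> i b))"
    have "sel \<in> S"
      using \<omega> istar unfolding S_def sel_def by (auto intro: empirical_selection_contested)
    moreover have "mean \<omega> (sel b) b \<le> mean \<omega> (ib b) b" if "b \<in> D sel" for b
      using that emp_best_minimal[of k "\<lambda>i. mean \<omega> i b"] istar ib_best
      unfolding D_def sel_def by auto
    ultimately show "\<omega> \<in> (\<Union>sel\<in>S. E sel)"
      using \<omega> unfolding E_def empirically_no_worse_def mean_def by auto
  qed
  then have "prob {\<omega> \<in> space M. emp_mpb k B p (mean \<omega>) \<noteq> {istar}} \<le> prob (\<Union>sel\<in>S. E sel)"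
    using E finite_contested_selections by (intro finite_measure_mono) (auto simp: S_def)
  also have "\<dots> \<le> (\<Sum>sel\<in>S. prob (E sel))"
    using E finite_contested_selections by (intro finite_measure_subadditive_finite) (auto simp: S_def)
  also have "\<dots> \<le> (\<Sum>sel\<in>S. exp (- (real n * ?rate sel)))"
    using E by (intro sum_mono) auto
  finally show ?thesis
    unfolding mean_def S_def .
qed
section \<open>Exponential decay rates\<close>

lemma eventually_less_sum:
  fixes g :: "'d \<Rightarrow> real"
  assumes "finite D" and "r < (\<Sum>d\<in>D. g d)"
    and "\<And>d s. d \<in> D \<Longrightarrow> s < g d \<Longrightarrow> eventually (\<lambda>n. s < f n d) F"
  shows "eventually (\<lambda>n. r < (\<Sum>d\<in>D. f n d)) F"
  using assms
proof (induction D arbitrary: r rule: finite_induct)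
  case empty
  then show ?case by simp
next
  case (insert d D)
  define \<epsilon> where "\<epsilon> = (g d + (\<Sum>d\<in>D. g d) - r) / 2"
  have "eventually (\<lambda>n. g d - \<epsilon> < f n d) F"
    using insert \<epsilon>_def by auto
  moreover have "eventually (\<lambda>n. r - (g d - \<epsilon>) < (\<Sum>d\<in>D. f n d)) F"
    using insert.prems insert.hyps by (intro insert.IH) (auto simp: \<epsilon>_def field_simps)
  ultimately have "eventually (\<lambda>n. r < f n d + (\<Sum>d\<in>D. f n d)) F"
    by eventually_elim simp
  then show ?case
    using insert.hyps by simp
qed

lemma eventually_Grate_sums_greater:
  assumes istar: "istar < k" and ib_k: "\<And>b. b < B \<Longrightarrow> ib b < k"
    and lim: "\<And>i b. i < k \<Longrightarrow> b < B \<Longrightarrow> (\<lambda>n. an n i b) \<longlonglongrightarrow> alpha i b"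
    and nonneg: "\<And>n i b. an n i b \<ge> 0"
    and r: "r < Min ((\<lambda>j. LDRj k B p y lam alpha ib istar j) ` ({..<k} - {istar}))"
  shows "eventually (\<lambda>n. \<forall>sel\<in>contested_selections k B p istar.
           r < (\<Sum>b | b < B \<and> sel b \<noteq> ib b. Grate y lam (an n) ib (sel b) b)) sequentially"
proof (rule eventually_ball_finite[OF finite_contested_selections], rule ballI)
  fix sel assume sel: "sel \<in> contested_selections k B p istar"
  then have sel_k: "sel b < k" if "b < B" for b
    using that unfolding contested_selections_def by auto
  show "eventually (\<lambda>n. r < (\<Sum>b | b < B \<and> sel b \<noteq> ib b. Grate y lam (an n) ib (sel b) b)) sequentially"
  proof (rule eventually_less_sum)
    show "r < (\<Sum>b | b < B \<and> sel b \<noteq> ib b. Grate y lam alpha ib (sel b) b)"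
      using r Min_LDRj_le_selection[OF sel istar, of y lam alpha ib] by linarith
    show "eventually (\<lambda>n. s < Grate y lam (an n) ib (sel b) b) sequentially"
      if "b \<in> {b. b < B \<and> sel b \<noteq> ib b}" "s < Grate y lam alpha ib (sel b) b" for b s
      using that sel_k ib_k by (intro eventually_less_Grate lim nonneg) (auto intro: lim)
  qed simp
qed

lemma exp_rate_eventually_greater:
  assumes C: "C > 0" and r: "r < s" and P_nonneg: "\<And>n. 0 \<le> P n"
    and P_le: "eventually (\<lambda>n. P n \<le> C * exp (- (real n * s))) sequentially"
  shows "eventually (\<lambda>n. ereal r < exp_rate n (P n)) sequentially"
proof -
  have "(\<lambda>n. ln C / real n) \<longlonglongrightarrow> 0"
    by (intro tendsto_divide_0[OF tendsto_const] filterlim_at_top_imp_at_infinity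
        filterlim_real_sequentially)
  then have "eventually (\<lambda>n. ln C / real n < s - r) sequentially"
    using r by (intro order_tendstoD) auto
  with P_le eventually_gt_at_top[of 0] show ?thesis
  proof eventually_elim
    case (elim n)
    show ?case
    proof (cases "P n = 0")
      case False
      with P_nonneg[of n] have "P n > 0"
        by simp
      then have "ln (P n) \<le> ln (C * exp (- (real n * s)))"
        using elim C by (subst ln_le_cancel_iff) auto
      also have "\<dots> = ln C - real n * s"
        using C by (simp add: ln_mult)
      finally have "ln (P n) \<le> ln C - real n * s" .
      then have "r < - ln (P n) / real n"
        using elim by (simp add: field_simps)
      with False show ?thesis
        by (simp add: exp_rate_def)
    qed (simp add: exp_rate_def)
  qed
qed

lemma Liminf_exp_rate_ge:
  assumes P_nonneg: "\<And>n. 0 \<le> P n"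
    and P_le: "\<And>r. r < L \<Longrightarrow> \<exists>C>0. eventually (\<lambda>n. P n \<le> C * exp (- (real n * r))) sequentially"
  shows "ereal L \<le> Liminf sequentially (\<lambda>n. exp_rate n (P n))"
  unfolding le_Liminf_iff
proof (intro allI impI)
  fix z assume "z < ereal L"
  then obtain r where r: "r < L" "z \<le> ereal r"
    by (cases z) (auto, meson less_ereal.simps(1) lt_ex)
  obtain C where "C > 0" "eventually (\<lambda>n. P n \<le> C * exp (- (real n * ((r + L) / 2)))) sequentially"
    using P_le[of "(r + L) / 2"] r by auto
  from exp_rate_eventually_greater[OF this(1) _ P_nonneg this(2), of r] r
  show "eventually (\<lambda>n. z < exp_rate n (P n)) sequentially"
    by (auto elim: eventually_mono)
qed

lemma Liminf_exp_rate_sum_ge: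
  assumes S: "finite S" and P_nonneg: "\<And>n. 0 \<le> P n"
    and P_le: "eventually (\<lambda>n. P n \<le> (\<Sum>s\<in>S. exp (- (real n * R n s)))) sequentially"
    and R: "\<And>r. r < L \<Longrightarrow> eventually (\<lambda>n. \<forall>s\<in>S. r < R n s) sequentially"
  shows "ereal L \<le> Liminf sequentially (\<lambda>n. exp_rate n (P n))"
proof (rule Liminf_exp_rate_ge[OF P_nonneg])
  fix r assume "r < L"
  from P_le R[OF this] have "eventually (\<lambda>n. P n \<le> (real (card S) + 1) * exp (- (real n * r))) sequentially"
  proof eventually_elim
    case (elim n)
    have "(\<Sum>s\<in>S. exp (- (real n * R n s))) \<le> (\<Sum>s\<in>S. exp (- (real n * r)))"
      using elim(2) by (intro sum_mono) (simp add: less_imp_le mult_left_mono)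
    with elim(1) show ?case
      by (simp add: distrib_right add_increasing2)
  qed
  then show "\<exists>C>0. eventually (\<lambda>n. P n \<le> C * exp (- (real n * r))) sequentially"
    by (intro exI[of _ "real (card S) + 1"]) auto
qed

theorem theorem1:
  fixes M :: "'a measure"
    and k B :: nat
    and p :: "nat \<Rightarrow> real"
    and y lam alpha :: "nat \<Rightarrow> nat \<Rightarrow> real"
    and ib :: "nat \<Rightarrow> nat"
    and istar :: nat
    and X :: "nat \<Rightarrow> nat \<Rightarrow> nat \<Rightarrow> 'a \<Rightarrow> real"
    and N :: "nat \<Rightarrow> nat \<Rightarrow> nat \<Rightarrow> nat"
  assumes k2: "k \<ge> 2"
    and p_nonneg: "\<forall>b<B. p b \<ge> 0"
    and p_sum: "(\<Sum>b<B. p b) = 1"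
    and lam_pos: "\<forall>i<k. \<forall>b<B. lam i b > 0"
    and ib_best: "\<forall>b<B. ib b < k \<and> (\<forall>j<k. j \<noteq> ib b \<longrightarrow> y (ib b) b < y j b)"
    and istar_mpb: "istar < k \<and> (\<forall>j<k. j \<noteq> istar \<longrightarrow>
          (\<Sum>b<B. p b * of_bool (j = ib b)) < (\<Sum>b<B. p b * of_bool (istar = ib b)))"
    and alpha_nonneg: "\<forall>i<k. \<forall>b<B. alpha i b \<ge> 0"
    and alpha_sum: "(\<Sum>i<k. \<Sum>b<B. alpha i b) = 1"
    and prob: "prob_space M"
    and X_distr: "\<forall>i<k. \<forall>b<B. \<forall>r. distributed M lborel (X i b r) (normal_density (y i b) (lam i b))"
    and X_indep: "prob_space.indep_vars M (\<lambda>_. borel) (\<lambda>(i, b, r). X i b r) ({..<k} \<times> {..<B} \<times> UNIV)"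
    and N_budget: "\<forall>n. (\<Sum>i<k. \<Sum>b<B. N n i b) = n"
    and N_frac: "\<forall>i<k. \<forall>b<B. (\<lambda>n. real (N n i b) / real n) \<longlonglongrightarrow> alpha i b"
    and N_inf: "\<forall>i<k. \<forall>b<B. filterlim (\<lambda>n. N n i b) at_top sequentially"
  shows "Liminf sequentially (\<lambda>n. exp_rate n (measure M
            {\<omega> \<in> space M. emp_mpb k B p (\<lambda>i b. sample_mean (N n i b) (\<lambda>r. X i b r \<omega>)) \<noteq> {istar}}))
         \<ge> ereal (Min ((\<lambda>j. LDRj k B p y lam alpha ib istar j) ` ({..<k} - {istar})))"
proof -
  interpret prob_space M by (rule prob)
  define L where "L = Min ((\<lambda>j. LDRj k B p y lam alpha ib istar j) ` ({..<k} - {istar}))"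
  define S where "S = contested_selections k B p istar"
  define rate where "rate n sel = (\<Sum>b | b < B \<and> sel b \<noteq> ib b.
      Grate y lam (\<lambda>i b. real (N n i b) / real n) ib (sel b) b)" for n sel
  define P where "P n = prob {\<omega> \<in> space M.
      emp_mpb k B p (\<lambda>i b. sample_mean (N n i b) (\<lambda>r. X i b r \<omega>)) \<noteq> {istar}}" for n
  have istar: "istar < k"
    using istar_mpb by simp
  have ib_le: "ib b < k \<and> (\<forall>j<k. y (ib b) b \<le> y j b)" if "b < B" for b
    using ib_best that by (metis order.order_iff_strict)
  have "eventually (\<lambda>n. 0 < N n i b) sequentially" if "i < k" "b < B" for i b
    using eventually_gt_at_top N_inf[rule_format, OF that] by (rule eventually_compose_filterlim)
  then have "eventually (\<lambda>n. 0 < n \<and> (\<forall>(i, b)\<in>{..<k} \<times> {..<B}. 0 < N n i b)) sequentially"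
    by (intro eventually_conj eventually_gt_at_top eventually_ball_finite) auto
  then have P_le: "eventually (\<lambda>n. P n \<le> (\<Sum>sel\<in>S. exp (- (real n * rate n sel)))) sequentially"
  proof eventually_elim
    case (elim n)
    then show ?case
      unfolding P_def S_def rate_def
      by (intro prob_emp_mpb_error_le[OF istar ib_le lam_pos[rule_format] X_distr[rule_format] X_indep])
        auto
  qed
  have "eventually (\<lambda>n. \<forall>sel\<in>S. r < rate n sel) sequentially" if "r < L" for r
    using that ib_best N_frac unfolding L_def S_def rate_def
    by (intro eventually_Grate_sums_greater[OF istar]) auto
  with P_le have "ereal L \<le> Liminf sequentially (\<lambda>n. exp_rate n (P n))"
    by (intro Liminf_exp_rate_sum_ge) (auto simp: S_def finite_contested_selections P_def)
  then show ?thesis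
    unfolding L_def P_def .
qed

end
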